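(* Let $u$ be a sufficiently regular function on $\mathcal{K}_{[s_0,s_1]}$, let $0\le k\le p$ and let $Z^K$ be any composition, in any order, of $p-k$ partial derivatives $\partial_\alpha$ and $k$ boosts $L_a$. Then, with a constant $C$ depending only on $p$, for all $\alpha,\beta\in\{0,1,2\}$, $$(s/t)^2|\partial_\alpha\partial_\beta Z^Ku|\le C|\Box u|_{p,k}+Ct^{-1}|\partial u|_{p+1,k+1},$$ and $$(s/t)^2|\partial\partial u|_{p,k}\le C|\Box u|_{p,k}+Ct^{-1}|\partial u|_{p+1,k+1}.$$
   Context: Coordinates $(t,x)$, $r=|x|$, $s=\sqrt{t^2-r^2}$, $\Box=\partial_t^2-\partial_1^2-\partial_2^2$, $\partial_0=\partial_t$, $L_a=x^a\partial_t+t\partial_a$ ($a=1,2$). $\mathcal{K}_{[s_0,s_1]}=\{(t,x): t>r+1,\ s_0^2\le t^2-r^2\le s_1^2\}$. For a function $w$: $|w|_{p,k}:=\max|Z^Kw|$ over all compositions $Z^K$, in any order, of $i$ partial derivatives and $j$ boosts with $i+j\le p$, $j\le k$; $|\partial w|_{p,k}:=\max_\alpha|\partial_\alpha w|_{p,k}$; $|\partial\partial w|_{p,k}:=\max_{\alpha,\beta}|\partial_\alpha\partial_\beta w|_{p,k}$. *)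

theory Defs
  imports "HOL-Analysis.Analysis"
begin

text \<open>Points of R^{1+2} as triples (t, x1, x2). Coordinate 0 is t, coordinates 1,2 are x^1, x^2.\<close>
type_synonym pt = "real \<times> real \<times> real"

definition coord :: "nat \<Rightarrow> pt \<Rightarrow> real" where
  "coord i y = (if i = 0 then fst y else if i = 1 then fst (snd y) else if i = 2 then snd (snd y) else 0)"

definition unitv :: "nat \<Rightarrow> pt" where
  "unitv i = (if i = 0 then (1,0,0) else if i = 1 then (0,1,0) else if i = 2 then (0,0,1) else (0,0,0))"

definition pd :: "nat \<Rightarrow> (pt \<Rightarrow> real) \<Rightarrow> pt \<Rightarrow> real" where
  "pd i w y = deriv (\<lambda>h. w (y + h *\<^sub>R unitv i)) 0"

fun iter_pd :: "nat list \<Rightarrow> (pt \<Rightarrow> real) \<Rightarrow> pt \<Rightarrow> real" where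
  "iter_pd [] w = w"
| "iter_pd (i # is) w = pd i (iter_pd is w)"

definition regular_on :: "pt set \<Rightarrow> (pt \<Rightarrow> real) \<Rightarrow> bool" where
  "regular_on U w \<longleftrightarrow> (\<forall>is. set is \<subseteq> {0,1,2} \<longrightarrow> iter_pd is w differentiable_on U)"

definition Kset :: "real \<Rightarrow> real \<Rightarrow> pt set" where
  "Kset s0 s1 = {(t, x1, x2). t > sqrt (x1\<^sup>2 + x2\<^sup>2) + 1 \<and>
       s0\<^sup>2 \<le> t\<^sup>2 - (x1\<^sup>2 + x2\<^sup>2) \<and> t\<^sup>2 - (x1\<^sup>2 + x2\<^sup>2) \<le> s1\<^sup>2}"

definition wave :: "(pt \<Rightarrow> real) \<Rightarrow> pt \<Rightarrow> real" where
  "wave w y = pd 0 (pd 0 w) y - pd 1 (pd 1 w) y - pd 2 (pd 2 w) y"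

datatype vf = D nat | L nat

definition valid_vf :: "vf set" where
  "valid_vf = D ` {0,1,2} \<union> L ` {1,2}"

fun apply_vf :: "vf \<Rightarrow> (pt \<Rightarrow> real) \<Rightarrow> pt \<Rightarrow> real" where
  "apply_vf (D i) w = pd i w"
| "apply_vf (L a) w = (\<lambda>y. coord a y * pd 0 w y + coord 0 y * pd a w y)"

definition applyZ :: "vf list \<Rightarrow> (pt \<Rightarrow> real) \<Rightarrow> pt \<Rightarrow> real" where
  "applyZ zs w = foldr apply_vf zs w"

definition is_boost :: "vf \<Rightarrow> bool" where
  "is_boost z = (case z of L _ \<Rightarrow> True | D _ \<Rightarrow> False)"

definition nboost :: "vf list \<Rightarrow> nat" where
  "nboost zs = length (filter is_boost zs)"

definition adm :: "nat \<Rightarrow> nat \<Rightarrow> vf list set" where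
  "adm p k = {zs. set zs \<subseteq> valid_vf \<and> length zs \<le> p \<and> nboost zs \<le> k}"

text \<open>|w|_{p,k}, |\<partial>w|_{p,k}, |\<partial>\<partial>w|_{p,k} evaluated at a point.\<close>
definition normpk :: "nat \<Rightarrow> nat \<Rightarrow> (pt \<Rightarrow> real) \<Rightarrow> pt \<Rightarrow> real" where
  "normpk p k w y = Max ((\<lambda>zs. \<bar>applyZ zs w y\<bar>) ` adm p k)"

definition normD :: "nat \<Rightarrow> nat \<Rightarrow> (pt \<Rightarrow> real) \<Rightarrow> pt \<Rightarrow> real" where
  "normD p k w y = Max ((\<lambda>a. normpk p k (pd a w) y) ` {0,1,2})"

definition normDD :: "nat \<Rightarrow> nat \<Rightarrow> (pt \<Rightarrow> real) \<Rightarrow> pt \<Rightarrow> real" where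
  "normDD p k w y = Max ((\<lambda>(a,b). normpk p k (pd a (pd b w)) y) ` ({0,1,2} \<times> {0,1,2}))"

end

theory Submission
  imports Defs
begin

(* The estimate is pointwise linear algebra on the Hessian w_ab = \<partial>_a \<partial>_b Z^K u.
   The boosts L_a = x^a \<partial>_t + t \<partial>_a give t w_ac = L_a \<partial>_c Z^K u - x^a w_0c, and, by the symmetry of w,
     (s/t)^2 w_00 = \<box>Z^K u + t^-1 (L_1 \<partial>_1 + L_2 \<partial>_2) Z^K u - t^-2 (x^1 L_1 + x^2 L_2) \<partial>_t Z^K u,
   so first w_00 and then every w_ac is bounded by |\<box>Z^K u| plus t^-1 times the terms L_a \<partial>_c Z^K u.
   The wave operator commutes with \<partial> and L, so \<box>Z^K u = Z^K \<box>u; and [\<partial>_c, L_a] is again a partial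
   derivative, so L_a \<partial>_c Z^K u is a sum of terms Z' \<partial> Z'' u with at most one more boost than Z^K,
   bounded by |\<partial>u|_{p+1,k+1}. For |\<partial>\<partial>u|_{p,k} the fields of Z^K are moved inside \<partial>\<partial> one at a
   time, each move producing only commutator terms of the same kind. *)

lemma has_derivative_along_line:
  assumes "(f has_derivative F) (at (z + s *\<^sub>R v))"
  shows "((\<lambda>s. f (z + s *\<^sub>R v)) has_real_derivative F v) (at s)"
proof -
  have "((\<lambda>s. z + s *\<^sub>R v) has_derivative (\<lambda>h. h *\<^sub>R v)) (at s)"
    by (auto intro!: derivative_eq_intros)
  from diff_chain_at[OF this assms]
  have "((\<lambda>s. f (z + s *\<^sub>R v)) has_derivative (\<lambda>h. F (h *\<^sub>R v))) (at s)"
    by (simp add: o_def)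
  moreover have "(\<lambda>h. F (h *\<^sub>R v)) = (*) (F v)"
    using linear_cmul[OF has_derivative_linear[OF assms]] by auto
  ultimately show ?thesis by (simp add: has_field_derivative_def)
qed

lemma pd_eq_derivative:
  assumes "(f has_derivative F) (at y)"
  shows "pd i f y = F (unitv i)"
  unfolding pd_def using has_derivative_along_line[of f F y 0 "unitv i"] assms
  by (simp add: DERIV_imp_deriv)

lemma has_real_derivative_pd_along_line:
  assumes "f differentiable (at (z + s *\<^sub>R unitv i))"
  shows "((\<lambda>s. f (z + s *\<^sub>R unitv i)) has_real_derivative pd i f (z + s *\<^sub>R unitv i)) (at s)"
  using assms has_derivative_along_line pd_eq_derivative by (metis differentiable_def)

(* Regularity holds only on U and pd is a junk value of deriv elsewhere, so identities between
   derivatives are proved pointwise on the open set U and transported by congruence rules like this one. *)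
lemma pd_cong_open:
  assumes "open U" "\<And>z. z \<in> U \<Longrightarrow> f z = g z" "y \<in> U"
  shows "pd i f y = pd i g y"
proof -
  have "open ((\<lambda>h. y + h *\<^sub>R unitv i) -` U)"
    by (rule continuous_open_vimage[OF assms(1)]) (auto intro!: continuous_intros)
  then have "\<forall>\<^sub>F h in nhds 0. y + h *\<^sub>R unitv i \<in> U"
    using assms(3) eventually_nhds_in_open by fastforce
  then have "\<forall>\<^sub>F h in nhds 0. f (y + h *\<^sub>R unitv i) = g (y + h *\<^sub>R unitv i)"
    by (rule eventually_mono) (use assms(2) in blast)
  then show ?thesis
    unfolding pd_def by (rule deriv_cong_ev) simp
qed

lemma pd_add:
  assumes "f differentiable (at y)" "g differentiable (at y)"
  shows "pd i (\<lambda>z. f z + g z) y = pd i f y + pd i g y"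
proof -
  obtain F G where F: "(f has_derivative F) (at y)" and G: "(g has_derivative G) (at y)"
    using assms by (auto simp: differentiable_def)
  show ?thesis
    using pd_eq_derivative[OF has_derivative_add[OF F G]] pd_eq_derivative[OF F] pd_eq_derivative[OF G]
    by simp
qed

lemma pd_diff:
  assumes "f differentiable (at y)" "g differentiable (at y)"
  shows "pd i (\<lambda>z. f z - g z) y = pd i f y - pd i g y"
proof -
  obtain F G where F: "(f has_derivative F) (at y)" and G: "(g has_derivative G) (at y)"
    using assms by (auto simp: differentiable_def)
  show ?thesis
    using pd_eq_derivative[OF has_derivative_diff[OF F G]] pd_eq_derivative[OF F] pd_eq_derivative[OF G]
    by simp
qed

lemma pd_mult:
  assumes "f differentiable (at y)" "g differentiable (at y)"
  shows "pd i (\<lambda>z. f z * g z) y = f y * pd i g y + pd i f y * g y"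
proof -
  obtain F G where F: "(f has_derivative F) (at y)" and G: "(g has_derivative G) (at y)"
    using assms by (auto simp: differentiable_def)
  show ?thesis
    using pd_eq_derivative[OF has_derivative_mult[OF F G]] pd_eq_derivative[OF F] pd_eq_derivative[OF G]
    by simp
qed

lemma pd_const [simp]: "pd i (\<lambda>z. c) = (\<lambda>z. 0)"
  by (simp add: pd_def fun_eq_iff)

lemma bounded_linear_coord: "bounded_linear (coord a)"
proof -
  have "coord a = (if a = 0 then fst else if a = 1 then fst \<circ> snd else if a = 2 then snd \<circ> snd else (\<lambda>_. 0))"
    by (auto simp: coord_def fun_eq_iff)
  then show ?thesis
    by (auto intro!: bounded_linear_compose[OF bounded_linear_fst] bounded_linear_compose[OF bounded_linear_snd]
        bounded_linear_fst bounded_linear_snd simp: o_def)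
qed

lemma pd_coord:
  assumes "a \<in> {0,1,2}"
  shows "pd c (coord a) y = (if c = a then 1 else 0)"
proof -
  have "pd c (coord a) y = coord a (unitv c)"
    using pd_eq_derivative[OF bounded_linear.has_derivative[OF bounded_linear_coord has_derivative_ident]]
    by simp
  with assms show ?thesis
    by (auto simp: coord_def unitv_def)
qed

section \<open>Symmetry of second partial derivatives\<close>

lemma norm_scaleR_unitv_le: "norm (c *\<^sub>R unitv i) \<le> \<bar>c\<bar>"
proof -
  have "norm (unitv i) \<le> 1"
    by (simp add: unitv_def zero_prod_def norm_Pair)
  then show ?thesis
    by (simp add: mult_left_le)
qed

lemma has_derivative_increment_estimate:
  assumes "(g has_derivative G) (at y)" and "e > 0"
  obtains d where "d > 0" and
    "\<And>v w. norm v < d \<Longrightarrow> norm w < d \<Longrightarrow>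
       \<bar>g (y + v) - g (y + w) - G (v - w)\<bar> \<le> e * (norm v + norm w)"
proof -
  obtain d where d: "d > 0" "\<And>z. norm (z - y) < d \<Longrightarrow> norm (g z - g y - G (z - y)) \<le> e * norm (z - y)"
    using assms unfolding has_derivative_at_alt by blast
  have "\<bar>g (y + v) - g (y + w) - G (v - w)\<bar> \<le> e * (norm v + norm w)"
    if "norm v < d" "norm w < d" for v w
  proof -
    have "G (v - w) = G v - G w"
      using linear_diff[OF has_derivative_linear[OF assms(1)]] .
    then have "g (y + v) - g (y + w) - G (v - w) = (g (y + v) - g y - G v) - (g (y + w) - g y - G w)"
      by simp
    with d(2)[of "y + v"] d(2)[of "y + w"] that show ?thesis
      by (simp add: distrib_left abs_diff_le_iff)
  qed
  with d(1) that show ?thesis by blast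
qed

(* Schwarz: the quotient of the second difference by h^2 tends to both mixed partials. *)
definition second_difference :: "(pt \<Rightarrow> real) \<Rightarrow> pt \<Rightarrow> nat \<Rightarrow> nat \<Rightarrow> real \<Rightarrow> real" where
  "second_difference f y i j h =
     f (y + h *\<^sub>R unitv i + h *\<^sub>R unitv j) - f (y + h *\<^sub>R unitv i) - f (y + h *\<^sub>R unitv j) + f y"

lemma second_difference_commute: "second_difference f y i j h = second_difference f y j i h"
  by (simp add: second_difference_def algebra_simps)

lemma second_difference_mean_value:
  assumes "f differentiable_on U" "open U" "ball y r \<subseteq> U" "0 < h" "2 * h < r"
  obtains \<xi> where "0 < \<xi>" "\<xi> < h" "second_difference f y i j h
    = h * (pd i f (y + h *\<^sub>R unitv j + \<xi> *\<^sub>R unitv i) - pd i f (y + \<xi> *\<^sub>R unitv i))"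
proof -
  define q where "q s = f (y + h *\<^sub>R unitv j + s *\<^sub>R unitv i) - f (y + s *\<^sub>R unitv i)" for s
  have diff_at: "f differentiable (at (y + v))" if "norm v < r" for v
  proof -
    have "y + v \<in> ball y r"
      using that by (simp add: dist_norm)
    then show ?thesis
      using assms(1-3) differentiable_on_eq_differentiable_at by blast
  qed
  have "DERIV q s :> pd i f (y + h *\<^sub>R unitv j + s *\<^sub>R unitv i) - pd i f (y + s *\<^sub>R unitv i)"
    if "0 \<le> s" "s \<le> h" for s
  proof -
    have "norm (s *\<^sub>R unitv i) \<le> s" "norm (h *\<^sub>R unitv j) \<le> h"
      using norm_scaleR_unitv_le[of s i] norm_scaleR_unitv_le[of h j] that assms(4) by simp_all
    then have "norm (h *\<^sub>R unitv j + s *\<^sub>R unitv i) < r" "norm (s *\<^sub>R unitv i) < r"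
      using norm_triangle_ineq[of "h *\<^sub>R unitv j" "s *\<^sub>R unitv i"] that assms(5) by linarith+
    from this[THEN diff_at] show ?thesis
      unfolding q_def by (intro derivative_intros has_real_derivative_pd_along_line) (simp_all add: add.assoc)
  qed
  from MVT2[of 0 h q, OF assms(4) this] obtain \<xi> where "0 < \<xi>" "\<xi> < h"
    "q h - q 0 = h * (pd i f (y + h *\<^sub>R unitv j + \<xi> *\<^sub>R unitv i) - pd i f (y + \<xi> *\<^sub>R unitv i))"
    by auto
  with that show ?thesis by (simp add: q_def second_difference_def algebra_simps)
qed

lemma second_difference_approx:
  assumes "f differentiable_on U" "open U" "ball y r \<subseteq> U" "(pd i f has_derivative G) (at y)"
    and incr: "\<And>v w. norm v < d \<Longrightarrow> norm w < d \<Longrightarrow>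
      \<bar>pd i f (y + v) - pd i f (y + w) - G (v - w)\<bar> \<le> e * (norm v + norm w)"
    and "0 \<le> e" "0 < h" "2 * h < r" "2 * h < d"
  shows "\<bar>second_difference f y i j h - h\<^sup>2 * pd j (pd i f) y\<bar> \<le> 3 * e * h\<^sup>2"
proof -
  obtain \<xi> where \<xi>: "0 < \<xi>" "\<xi> < h" and mvt: "second_difference f y i j h
    = h * (pd i f (y + h *\<^sub>R unitv j + \<xi> *\<^sub>R unitv i) - pd i f (y + \<xi> *\<^sub>R unitv i))"
    using second_difference_mean_value[OF assms(1-3,7,8)] by blast
  define v where "v = h *\<^sub>R unitv j + \<xi> *\<^sub>R unitv i"
  define w where "w = \<xi> *\<^sub>R unitv i"
  have "norm w \<le> h" "norm (h *\<^sub>R unitv j) \<le> h"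
    using norm_scaleR_unitv_le[of \<xi> i] norm_scaleR_unitv_le[of h j] \<xi> assms(7)
    unfolding w_def by linarith+
  then have vw: "norm v \<le> 2 * h" "norm w \<le> h"
    using norm_triangle_ineq[of "h *\<^sub>R unitv j" w] unfolding v_def w_def[symmetric] by linarith+
  have "G (v - w) = h * pd j (pd i f) y"
    using pd_eq_derivative[OF assms(4)] linear_cmul[OF has_derivative_linear[OF assms(4)]]
    by (simp add: v_def w_def)
  then have "\<bar>pd i f (y + v) - pd i f (y + w) - h * pd j (pd i f) y\<bar> \<le> e * (norm v + norm w)"
    using incr[of v w] vw assms(7,9) by simp
  also have "\<dots> \<le> e * (3 * h)"
    using vw assms(6) by (intro mult_left_mono) auto
  finally have "h * \<bar>pd i f (y + v) - pd i f (y + w) - h * pd j (pd i f) y\<bar> \<le> h * (e * (3 * h))"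
    using assms(7) by (intro mult_left_mono) auto
  moreover have "second_difference f y i j h - h\<^sup>2 * pd j (pd i f) y
      = h * (pd i f (y + v) - pd i f (y + w) - h * pd j (pd i f) y)"
    using mvt by (simp add: v_def w_def add.assoc power2_eq_square right_diff_distrib)
  ultimately show ?thesis
    using assms(7) by (simp add: abs_mult power2_eq_square mult.commute mult.left_commute)
qed

lemma second_difference_quotient_tendsto:
  assumes "f differentiable_on U" "open U" "y \<in> U" "pd i f differentiable (at y)"
  shows "((\<lambda>h. second_difference f y i j h / h\<^sup>2) \<longlongrightarrow> pd j (pd i f) y) (at_right 0)"
proof (rule tendstoI)
  fix \<epsilon> :: real assume "\<epsilon> > 0"
  obtain G where G: "(pd i f has_derivative G) (at y)"
    using assms(4) by (auto simp: differentiable_def)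
  obtain d where "d > 0" and incr: "\<And>v w. norm v < d \<Longrightarrow> norm w < d \<Longrightarrow>
      \<bar>pd i f (y + v) - pd i f (y + w) - G (v - w)\<bar> \<le> \<epsilon> / 6 * (norm v + norm w)"
    using has_derivative_increment_estimate[OF G, of "\<epsilon> / 6"] \<open>\<epsilon> > 0\<close> by auto
  obtain r where "r > 0" "ball y r \<subseteq> U"
    using assms(2,3) open_contains_ball by blast
  have "\<bar>second_difference f y i j h / h\<^sup>2 - pd j (pd i f) y\<bar> < \<epsilon>"
    if "0 < h" "h < min d r / 2" for h
  proof -
    have "\<bar>second_difference f y i j h - h\<^sup>2 * pd j (pd i f) y\<bar> \<le> 3 * (\<epsilon> / 6) * h\<^sup>2"
      using that \<open>\<epsilon> > 0\<close> by (intro second_difference_approx[OF assms(1,2) \<open>ball y r \<subseteq> U\<close> G incr]) auto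
    moreover have "0 < \<epsilon> * h\<^sup>2"
      using that(1) \<open>\<epsilon> > 0\<close> by simp
    ultimately have "\<bar>second_difference f y i j h - h\<^sup>2 * pd j (pd i f) y\<bar> / h\<^sup>2 < \<epsilon>"
      using that(1) by (simp add: divide_less_eq)
    moreover have "second_difference f y i j h / h\<^sup>2 - pd j (pd i f) y
        = (second_difference f y i j h - h\<^sup>2 * pd j (pd i f) y) / h\<^sup>2"
      using that(1) by (simp add: field_simps)
    ultimately show ?thesis
      by (simp add: abs_divide)
  qed
  with \<open>d > 0\<close> \<open>r > 0\<close>
  show "\<forall>\<^sub>F h in at_right 0. dist (second_difference f y i j h / h\<^sup>2) (pd j (pd i f) y) < \<epsilon>"
    unfolding eventually_at_right_field dist_real_def by (intro exI[of _ "min d r / 2"]) auto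
qed

lemma pd_pd_commute:
  assumes "f differentiable_on U" "open U" "y \<in> U"
    and "pd i f differentiable (at y)" "pd j f differentiable (at y)"
  shows "pd j (pd i f) y = pd i (pd j f) y"
  using tendsto_unique[OF trivial_limit_at_right_real]
    second_difference_quotient_tendsto[OF assms(1-4), of j]
    second_difference_quotient_tendsto[OF assms(1-3,5), of i]
  by (simp add: second_difference_commute[of f y j i])

lemma differentiable_on_transform:
  assumes "\<And>z. z \<in> S \<Longrightarrow> f z = g z" "f differentiable_on S"
  shows "g differentiable_on S"
  using assms unfolding differentiable_on_def
  by (blast intro: differentiable_transform_within[OF _ zero_less_one])

lemma iter_pd_append: "iter_pd (xs @ ys) f = iter_pd xs (iter_pd ys f)"
  by (induction xs) auto

lemma iter_pd_cong_open:
  assumes "open U" "\<And>z. z \<in> U \<Longrightarrow> f z = g z" "y \<in> U"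
  shows "iter_pd js f y = iter_pd js g y"
  using assms(3) by (induction js arbitrary: y) (auto intro: pd_cong_open[OF assms(1)] assms(2))

lemma pd_closed_imp_regular_on:
  assumes "open U" "f \<in> S"
    and differentiable: "\<And>g. g \<in> S \<Longrightarrow> g differentiable_on U"
    and pd_closed: "\<And>g i. g \<in> S \<Longrightarrow> i \<in> {0,1,2} \<Longrightarrow> \<exists>h\<in>S. \<forall>z\<in>U. pd i g z = h z"
  shows "regular_on U f"
proof -
  have "\<forall>g\<in>S. iter_pd js g differentiable_on U" if "set js \<subseteq> {0,1,2}" for js
    using that
  proof (induction js rule: rev_induct)
    case Nil
    then show ?case using differentiable by simp
  next
    case (snoc i js)
    show ?case
    proof
      fix g assume "g \<in> S"
      moreover have "i \<in> {0,1,2}"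
        using snoc.prems by simp
      ultimately obtain h where "h \<in> S" "\<forall>z\<in>U. pd i g z = h z"
        using pd_closed by blast
      then have "\<forall>z\<in>U. iter_pd js h z = iter_pd js (pd i g) z"
        using iter_pd_cong_open[OF assms(1)] by metis
      with snoc \<open>h \<in> S\<close> show "iter_pd (js @ [i]) g differentiable_on U"
        by (auto simp: iter_pd_append intro: differentiable_on_transform)
    qed
  qed
  with assms(2) show ?thesis
    by (simp add: regular_on_def)
qed

lemma regular_on_differentiable_on: "regular_on U f \<Longrightarrow> f differentiable_on U"
  by (auto simp: regular_on_def dest: spec[of _ "[]"])

lemma regular_on_differentiable_at: "regular_on U f \<Longrightarrow> open U \<Longrightarrow> y \<in> U \<Longrightarrow> f differentiable (at y)"
  using regular_on_differentiable_on differentiable_on_eq_differentiable_at by blast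

lemma regular_on_pd: "regular_on U f \<Longrightarrow> i \<in> {0,1,2} \<Longrightarrow> regular_on U (pd i f)"
  unfolding regular_on_def
proof (intro allI impI)
  fix js :: "nat list"
  assume "\<forall>js. set js \<subseteq> {0,1,2} \<longrightarrow> iter_pd js f differentiable_on U" "i \<in> {0,1,2}" "set js \<subseteq> {0,1,2}"
  then have "iter_pd (js @ [i]) f differentiable_on U" by simp
  then show "iter_pd js (pd i f) differentiable_on U" by (simp add: iter_pd_append)
qed

lemma regular_on_const: "regular_on U (\<lambda>z. c)"
proof -
  have "iter_pd js (\<lambda>z. c) = (\<lambda>z. if js = [] then c else 0)" for js
    by (induction js) auto
  then show ?thesis
    by (simp add: regular_on_def)
qed

lemma regular_on_lincomb:
  assumes "open U" "regular_on U f" "regular_on U g"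
  shows "regular_on U (\<lambda>z. a * f z + b * g z)"
proof (rule pd_closed_imp_regular_on[OF assms(1)])
  let ?S = "{\<lambda>z. a * f z + b * g z | f g. regular_on U f \<and> regular_on U g}"
  show "(\<lambda>z. a * f z + b * g z) \<in> ?S"
    using assms by blast
  show "h differentiable_on U" if "h \<in> ?S" for h
    using that by (auto intro!: differentiable_on_add differentiable_on_mult differentiable_on_const simp: regular_on_differentiable_on)
  show "\<exists>h'\<in>?S. \<forall>z\<in>U. pd i h z = h' z" if "h \<in> ?S" "i \<in> {0,1,2}" for h i
  proof -
    obtain f g where h: "h = (\<lambda>z. a * f z + b * g z)" "regular_on U f" "regular_on U g"
      using \<open>h \<in> ?S\<close> by blast
    have "pd i h z = a * pd i f z + b * pd i g z" if "z \<in> U" for z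
    proof -
      have "f differentiable (at z)" "g differentiable (at z)"
        using h(2,3) regular_on_differentiable_at assms(1) that by blast+
      then show ?thesis
        unfolding h(1) by (simp add: pd_add pd_mult)
    qed
    moreover have "(\<lambda>z. a * pd i f z + b * pd i g z) \<in> ?S"
      using h(2,3) that(2) regular_on_pd by blast
    ultimately show ?thesis
      by (intro bexI[of _ "\<lambda>z. a * pd i f z + b * pd i g z"]) auto
  qed
qed

lemma regular_on_add: "open U \<Longrightarrow> regular_on U f \<Longrightarrow> regular_on U g \<Longrightarrow> regular_on U (\<lambda>z. f z + g z)"
  using regular_on_lincomb[of U f g 1 1] by simp

lemma regular_on_diff: "open U \<Longrightarrow> regular_on U f \<Longrightarrow> regular_on U g \<Longrightarrow> regular_on U (\<lambda>z. f z - g z)"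
  using regular_on_lincomb[of U f g 1 "-1"] by simp

lemma regular_on_coord_mult_add:
  assumes "open U" "a \<in> {0,1,2}" "regular_on U g" "regular_on U h"
  shows "regular_on U (\<lambda>z. coord a z * g z + h z)"
proof (rule pd_closed_imp_regular_on[OF assms(1)])
  let ?S = "{\<lambda>z. coord a z * g z + h z | g h. regular_on U g \<and> regular_on U h}"
  show "(\<lambda>z. coord a z * g z + h z) \<in> ?S"
    using assms by blast
  show "f differentiable_on U" if "f \<in> ?S" for f
    using that bounded_linear_imp_differentiable_on[OF bounded_linear_coord]
    by (auto intro!: differentiable_on_add differentiable_on_mult simp: regular_on_differentiable_on)
  show "\<exists>f'\<in>?S. \<forall>z\<in>U. pd i f z = f' z" if "f \<in> ?S" "i \<in> {0,1,2}" for f i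
  proof -
    obtain g h where f: "f = (\<lambda>z. coord a z * g z + h z)" "regular_on U g" "regular_on U h"
      using \<open>f \<in> ?S\<close> by blast
    define h' where "h' z = (if i = a then g z else 0) + pd i h z" for z
    have "pd i f z = coord a z * pd i g z + h' z" if "z \<in> U" for z
    proof -
      have coord_diff: "coord a differentiable (at z)"
        by (rule bounded_linear_imp_differentiable[OF bounded_linear_coord])
      have g_diff: "g differentiable (at z)" and h_diff: "h differentiable (at z)"
        using f(2,3) regular_on_differentiable_at assms(1) that by blast+
      have "pd i f z = pd i (\<lambda>z. coord a z * g z) z + pd i h z"
        unfolding f(1) using pd_add[OF differentiable_mult[OF coord_diff g_diff] h_diff] .
      also have "pd i (\<lambda>z. coord a z * g z) z = coord a z * pd i g z + (if i = a then g z else 0)"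
        using pd_mult[OF coord_diff g_diff] pd_coord[OF assms(2)] by simp
      finally show ?thesis by (simp add: h'_def)
    qed
    moreover have "regular_on U h'"
      unfolding h'_def using f(2,3) that(2)
      by (cases "i = a") (simp_all add: regular_on_add regular_on_pd regular_on_const assms(1))
    moreover have "regular_on U (pd i g)"
      using f(2) that(2) by (rule regular_on_pd)
    ultimately show ?thesis
      by (intro bexI[of _ "\<lambda>z. coord a z * pd i g z + h' z"]) auto
  qed
qed

lemma pd_commute:
  assumes "open U" "regular_on U f" "y \<in> U" "i \<in> {0,1,2}" "j \<in> {0,1,2}"
  shows "pd i (pd j f) y = pd j (pd i f) y"
  using pd_pd_commute[OF regular_on_differentiable_on[OF assms(2)] assms(1,3)]
    regular_on_differentiable_at[OF regular_on_pd[OF assms(2)] assms(1,3)] assms(4,5)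
  by metis

section \<open>Vector fields, their commutators and the wave operator\<close>

lemma valid_vfE:
  assumes "z \<in> valid_vf"
  obtains (D) i where "z = D i" "i \<in> {0,1,2}" | (L) a where "z = L a" "a \<in> {1,2}"
  using assms unfolding valid_vf_def by blast

lemma regular_on_apply_vf:
  assumes "open U" "regular_on U f" "z \<in> valid_vf"
  shows "regular_on U (apply_vf z f)"
  using assms(3)
proof (cases rule: valid_vfE)
  case (D i)
  then show ?thesis using assms(2) by (simp add: regular_on_pd)
next
  case (L a)
  have "regular_on U (\<lambda>y. coord 0 y * pd a f y + 0)"
    using L(2) assms(1,2) by (intro regular_on_coord_mult_add regular_on_pd regular_on_const) auto
  then have "regular_on U (\<lambda>y. coord a y * pd 0 f y + coord 0 y * pd a f y)"
    using L(2) assms(1,2) by (intro regular_on_coord_mult_add regular_on_pd) auto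
  then show ?thesis using L(1) by simp
qed

lemma applyZ_Nil [simp]: "applyZ [] f = f"
  and applyZ_Cons [simp]: "applyZ (z # zs) f = apply_vf z (applyZ zs f)"
  by (simp_all add: applyZ_def)

lemma applyZ_append: "applyZ (xs @ ys) f = applyZ xs (applyZ ys f)"
  by (simp add: applyZ_def)

lemma regular_on_applyZ:
  "open U \<Longrightarrow> regular_on U f \<Longrightarrow> set zs \<subseteq> valid_vf \<Longrightarrow> regular_on U (applyZ zs f)"
  by (induction zs) (auto intro: regular_on_apply_vf)

lemma applyZ_zero [simp]: "applyZ zs (\<lambda>y. 0) = (\<lambda>y. 0)"
proof (induction zs)
  case (Cons z zs)
  then show ?case by (cases z) simp_all
qed simp

lemma apply_vf_cong_open:
  assumes "open U" "\<And>y. y \<in> U \<Longrightarrow> f y = g y" "y \<in> U"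
  shows "apply_vf z f y = apply_vf z g y"
  by (cases z) (simp_all add: pd_cong_open[OF assms])

lemma applyZ_cong_open:
  assumes "open U" "\<And>y. y \<in> U \<Longrightarrow> f y = g y" "y \<in> U"
  shows "applyZ zs f y = applyZ zs g y"
  using assms(3) by (induction zs arbitrary: y) (auto intro: apply_vf_cong_open[OF assms(1)] assms(2))

lemma apply_vf_add:
  assumes "f differentiable (at y)" "g differentiable (at y)"
  shows "apply_vf z (\<lambda>w. f w + g w) y = apply_vf z f y + apply_vf z g y"
  using pd_add[OF assms] by (cases z) (simp_all add: algebra_simps)

lemma apply_vf_diff:
  assumes "f differentiable (at y)" "g differentiable (at y)"
  shows "apply_vf z (\<lambda>w. f w - g w) y = apply_vf z f y - apply_vf z g y"
  using pd_diff[OF assms] by (cases z) (simp_all add: right_diff_distrib)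

lemma applyZ_add:
  assumes "open U" "regular_on U f" "regular_on U g" "set zs \<subseteq> valid_vf" "y \<in> U"
  shows "applyZ zs (\<lambda>w. f w + g w) y = applyZ zs f y + applyZ zs g y"
  using assms(4,5)
proof (induction zs arbitrary: y)
  case (Cons z zs)
  have "applyZ (z # zs) (\<lambda>w. f w + g w) y = apply_vf z (\<lambda>w. applyZ zs f w + applyZ zs g w) y"
    using apply_vf_cong_open[OF assms(1) Cons.IH] Cons.prems by simp
  also have "\<dots> = applyZ (z # zs) f y + applyZ (z # zs) g y"
  proof -
    have "regular_on U (applyZ zs f)" "regular_on U (applyZ zs g)"
      using Cons.prems assms(1-3) by (simp_all add: regular_on_applyZ)
    then show ?thesis
      using apply_vf_add regular_on_differentiable_at assms(1) Cons.prems(2) by simp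
  qed
  finally show ?case .
qed simp

definition boost_commutator :: "nat \<Rightarrow> nat \<Rightarrow> (pt \<Rightarrow> real) \<Rightarrow> pt \<Rightarrow> real" where
  "boost_commutator a c f = (if c = a then pd 0 f else if c = 0 then pd a f else (\<lambda>y. 0))"

lemma boost_commutator_cases:
  assumes "a \<in> {1,2}"
  obtains "boost_commutator a c f = (\<lambda>y. 0)" | c' where "c' \<in> {0,1,2}" "boost_commutator a c f = pd c' f"
  using assms unfolding boost_commutator_def by (metis insertCI)

lemma boost_commutator_le:
  assumes "a \<in> {1,2}" "\<Phi> (\<lambda>y. 0) \<le> B" "\<And>c'. c' \<in> {0,1,2} \<Longrightarrow> \<Phi> (pd c' f) \<le> B"
  shows "\<Phi> (boost_commutator a c f) \<le> B"
  by (cases rule: boost_commutator_cases[OF assms(1), of c f]) (simp_all add: assms(2,3))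

lemma regular_on_boost_commutator:
  assumes "regular_on U f" "a \<in> {1,2}"
  shows "regular_on U (boost_commutator a c f)"
  by (cases rule: boost_commutator_cases[OF assms(2), of c f]) (simp_all add: regular_on_const regular_on_pd assms(1))

lemma pd_boost:
  assumes "open U" "regular_on U f" "y \<in> U" "a \<in> {1,2}" "c \<in> {0,1,2}"
  shows "pd c (apply_vf (L a) f) y = apply_vf (L a) (pd c f) y + boost_commutator a c f y"
proof -
  have a: "a \<in> {0,1,2}" using assms(4) by auto
  have coord_diff: "coord b differentiable (at y)" for b
    by (rule bounded_linear_imp_differentiable[OF bounded_linear_coord])
  have diff: "pd b f differentiable (at y)" if "b \<in> {0,1,2}" for b
    using regular_on_differentiable_at[OF regular_on_pd[OF assms(2) that] assms(1,3)] .
  have "pd c (apply_vf (L a) f) y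
      = pd c (\<lambda>w. coord a w * pd 0 f w) y + pd c (\<lambda>w. coord 0 w * pd a f w) y"
    using pd_add[OF differentiable_mult[OF coord_diff diff] differentiable_mult[OF coord_diff diff]] a
    by simp
  also have "\<dots> = coord a y * pd c (pd 0 f) y + (if c = a then pd 0 f y else 0)
      + (coord 0 y * pd c (pd a f) y + (if c = 0 then pd a f y else 0))"
    using pd_mult[OF coord_diff diff] pd_coord a by simp
  also have "\<dots> = apply_vf (L a) (pd c f) y + boost_commutator a c f y"
    using pd_commute[OF assms(1-3) assms(5)] a assms(4) by (auto simp: boost_commutator_def)
  finally show ?thesis .
qed

lemma pd_pd_boost:
  assumes "open U" "regular_on U f" "y \<in> U" "a \<in> {1,2}" "c \<in> {0,1,2}" "d \<in> {0,1,2}"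
  shows "pd c (pd d (apply_vf (L a) f)) y
    = apply_vf (L a) (pd c (pd d f)) y + boost_commutator a c (pd d f) y + pd c (boost_commutator a d f) y"
proof -
  have "pd c (pd d (apply_vf (L a) f)) y = pd c (\<lambda>w. apply_vf (L a) (pd d f) w + boost_commutator a d f w) y"
    using pd_boost[OF assms(1,2) _ assms(4,6)] by (intro pd_cong_open[OF assms(1) _ assms(3)])
  also have "\<dots> = pd c (apply_vf (L a) (pd d f)) y + pd c (boost_commutator a d f) y"
  proof (rule pd_add)
    have "L a \<in> valid_vf"
      using assms(4) by (auto simp: valid_vf_def)
    from regular_on_apply_vf[OF assms(1) regular_on_pd[OF assms(2,6)] this]
    show "apply_vf (L a) (pd d f) differentiable (at y)"
      by (rule regular_on_differentiable_at[OF _ assms(1,3)])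
    show "boost_commutator a d f differentiable (at y)"
      by (rule regular_on_differentiable_at[OF regular_on_boost_commutator[OF assms(2,4)] assms(1,3)])
  qed
  also have "\<dots> = apply_vf (L a) (pd c (pd d f)) y + boost_commutator a c (pd d f) y + pd c (boost_commutator a d f) y"
    using pd_boost[OF assms(1) regular_on_pd[OF assms(2,6)] assms(3-5)] by simp
  finally show ?thesis .
qed

lemma apply_vf_wave:
  assumes "open U" "regular_on U f" "y \<in> U"
  shows "apply_vf z (wave f) y = apply_vf z (pd 0 (pd 0 f)) y
    - apply_vf z (pd 1 (pd 1 f)) y - apply_vf z (pd 2 (pd 2 f)) y"
proof -
  have reg: "regular_on U (pd j (pd j f))" if "j \<in> {0,1,2}" for j
    using that assms(2) by (intro regular_on_pd)
  have "regular_on U (\<lambda>y. pd 0 (pd 0 f) y - pd 1 (pd 1 f) y)"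
    using reg by (intro regular_on_diff assms(1)) auto
  then have "apply_vf z (wave f) y
      = apply_vf z (\<lambda>y. pd 0 (pd 0 f) y - pd 1 (pd 1 f) y) y - apply_vf z (pd 2 (pd 2 f)) y"
    unfolding wave_def using reg[of 2]
    by (intro apply_vf_diff regular_on_differentiable_at[OF _ assms(1,3)]) auto
  also have "apply_vf z (\<lambda>y. pd 0 (pd 0 f) y - pd 1 (pd 1 f) y) y
      = apply_vf z (pd 0 (pd 0 f)) y - apply_vf z (pd 1 (pd 1 f)) y"
    using reg[of 0] reg[of 1]
    by (intro apply_vf_diff regular_on_differentiable_at[OF _ assms(1,3)]) auto
  finally show ?thesis .
qed

lemma wave_pd:
  assumes "open U" "regular_on U f" "y \<in> U" "i \<in> {0,1,2}"
  shows "wave (pd i f) y = pd i (wave f) y"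
proof -
  have swap: "pd i (pd j (pd j f)) y = pd j (pd j (pd i f)) y" if "j \<in> {0,1,2}" for j
  proof -
    have "pd i (pd j (pd j f)) y = pd j (pd i (pd j f)) y"
      using pd_commute[OF assms(1) regular_on_pd[OF assms(2) that] assms(3,4) that] .
    also have "\<dots> = pd j (pd j (pd i f)) y"
      using pd_commute[OF assms(1,2) _ assms(4) that] by (intro pd_cong_open[OF assms(1) _ assms(3)])
    finally show ?thesis .
  qed
  have "pd i (wave f) y = pd i (pd 0 (pd 0 f)) y - pd i (pd 1 (pd 1 f)) y - pd i (pd 2 (pd 2 f)) y"
    using apply_vf_wave[OF assms(1-3), of "D i"] by simp
  then show ?thesis
    using swap by (simp add: wave_def)
qed

(* The commutator terms of \<partial>_0 \<partial>_0 and \<partial>_a \<partial>_a cancel: the boosts generate Lorentz transformations. *)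
lemma wave_boost:
  assumes "open U" "regular_on U f" "y \<in> U" "a \<in> {1,2}"
  shows "wave (apply_vf (L a) f) y = apply_vf (L a) (wave f) y"
proof -
  have "apply_vf (L a) (wave f) y = apply_vf (L a) (pd 0 (pd 0 f)) y
      - apply_vf (L a) (pd 1 (pd 1 f)) y - apply_vf (L a) (pd 2 (pd 2 f)) y"
    by (rule apply_vf_wave[OF assms(1-3)])
  with assms(4) show ?thesis
    unfolding wave_def
    by (auto simp del: apply_vf.simps simp add: pd_pd_boost[OF assms(1-4)] boost_commutator_def)
qed

lemma wave_apply_vf:
  assumes "open U" "regular_on U f" "y \<in> U" "z \<in> valid_vf"
  shows "wave (apply_vf z f) y = apply_vf z (wave f) y"
  using assms(4)
proof (cases rule: valid_vfE)
  case (D i)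
  then show ?thesis using wave_pd[OF assms(1-3)] by simp
next
  case (L a)
  then show ?thesis using wave_boost[OF assms(1-3)] by simp
qed

lemma wave_applyZ:
  assumes "open U" "regular_on U u" "set zs \<subseteq> valid_vf" "y \<in> U"
  shows "wave (applyZ zs u) y = applyZ zs (wave u) y"
  using assms(3,4)
proof (induction zs arbitrary: y)
  case (Cons z zs)
  have "wave (apply_vf z (applyZ zs u)) y = apply_vf z (wave (applyZ zs u)) y"
    using Cons.prems assms(1,2) by (intro wave_apply_vf regular_on_applyZ) auto
  also have "\<dots> = applyZ (z # zs) (wave u) y"
    using apply_vf_cong_open[OF assms(1) Cons.IH] Cons.prems by simp
  finally show ?case by simp
qed simp

lemma nboost_Nil [simp]: "nboost [] = 0"
  and nboost_Cons_L [simp]: "nboost (L a # zs) = Suc (nboost zs)"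
  and nboost_append [simp]: "nboost (xs @ ys) = nboost xs + nboost ys"
  by (simp_all add: nboost_def is_boost_def)

lemma finite_adm: "finite (adm p k)"
proof -
  have "finite valid_vf" by (simp add: valid_vf_def)
  from finite_lists_length_le[OF this, of p] show ?thesis
    by (rule finite_subset[rotated]) (auto simp: adm_def)
qed

lemma Nil_in_adm: "[] \<in> adm p k"
  by (simp add: adm_def)

lemma adm_mono: "p \<le> p' \<Longrightarrow> k \<le> k' \<Longrightarrow> adm p k \<subseteq> adm p' k'"
  by (auto simp: adm_def)

lemma abs_applyZ_le_normpk: "zs \<in> adm p k \<Longrightarrow> \<bar>applyZ zs w y\<bar> \<le> normpk p k w y"
  unfolding normpk_def by (rule Max_ge) (auto simp: finite_adm)

lemma normpk_nonneg: "0 \<le> normpk p k w y"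
  using abs_applyZ_le_normpk[OF Nil_in_adm[of p k], of w y] by linarith

lemma normpk_mono: "p \<le> p' \<Longrightarrow> k \<le> k' \<Longrightarrow> normpk p k w y \<le> normpk p' k' w y"
  unfolding normpk_def using Nil_in_adm[of p k] finite_adm[of p' k']
  by (intro Max_mono image_mono adm_mono) auto

lemma normpk_pd_le_normD: "c \<in> {0,1,2} \<Longrightarrow> normpk p k (pd c u) y \<le> normD p k u y"
  unfolding normD_def by (rule Max_ge) auto

lemma normD_nonneg: "0 \<le> normD p k u y"
  using normpk_pd_le_normD[of 0 p k u y] normpk_nonneg[of p k "pd 0 u" y] by simp

lemma normD_mono: "p \<le> p' \<Longrightarrow> k \<le> k' \<Longrightarrow> normD p k u y \<le> normD p' k' u y"
  unfolding normD_def[of p k]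
  by (subst Max_le_iff) (auto intro: order_trans[OF normpk_mono normpk_pd_le_normD])

lemma mult_Max_le:
  fixes A :: "real set"
  assumes "finite A" "A \<noteq> {}" "\<And>x. x \<in> A \<Longrightarrow> c * x \<le> B"
  shows "c * Max A \<le> B"
  using assms(3)[OF Max_in[OF assms(1,2)]] .

lemma mult_normDD_le:
  assumes "\<And>a b zs. a \<in> {0,1,2} \<Longrightarrow> b \<in> {0,1,2} \<Longrightarrow> zs \<in> adm p k \<Longrightarrow>
    c * \<bar>applyZ zs (pd a (pd b u)) y\<bar> \<le> B"
  shows "c * normDD p k u y \<le> B"
  unfolding normDD_def normpk_def
  using assms Nil_in_adm finite_adm by (fastforce intro!: mult_Max_le)

section \<open>Moving vector fields past partial derivatives\<close>

lemma applyZ_pd_pd_eq_snoc: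
  assumes "open U" "regular_on U f" "y \<in> U" "c \<in> {0,1,2}" "i \<in> {0,1,2}"
  shows "applyZ pre (pd c (pd i f)) y = applyZ (pre @ [D i]) (pd c f) y"
  unfolding applyZ_append using pd_commute[OF assms(1,2) _ assms(4,5)]
  by (auto intro: applyZ_cong_open[OF assms(1) _ assms(3)])

lemma applyZ_pd_boost_eq_snoc:
  assumes "open U" "regular_on U f" "y \<in> U" "set pre \<subseteq> valid_vf" "a \<in> {1,2}" "c \<in> {0,1,2}"
  shows "applyZ pre (pd c (apply_vf (L a) f)) y
    = applyZ (pre @ [L a]) (pd c f) y + applyZ pre (boost_commutator a c f) y"
proof -
  have "applyZ pre (pd c (apply_vf (L a) f)) y
      = applyZ pre (\<lambda>w. apply_vf (L a) (pd c f) w + boost_commutator a c f w) y"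
    using pd_boost[OF assms(1,2) _ assms(5,6)] by (intro applyZ_cong_open[OF assms(1) _ assms(3)])
  also have "\<dots> = applyZ pre (apply_vf (L a) (pd c f)) y + applyZ pre (boost_commutator a c f) y"
  proof (rule applyZ_add[OF assms(1) _ _ assms(4,3)])
    have "L a \<in> valid_vf"
      using assms(5) by (auto simp: valid_vf_def)
    then show "regular_on U (apply_vf (L a) (pd c f))"
      using assms(1,2,6) by (intro regular_on_apply_vf regular_on_pd)
    show "regular_on U (boost_commutator a c f)"
      by (rule regular_on_boost_commutator[OF assms(2,5)])
  qed
  finally show ?thesis
    by (simp add: applyZ_append)
qed

lemma applyZ_snoc_D_pd_pd:
  assumes "open U" "regular_on U f" "y \<in> U" "c \<in> {0,1,2}" "d \<in> {0,1,2}" "i \<in> {0,1,2}"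
  shows "applyZ (pre @ [D i]) (pd c (pd d f)) y = applyZ pre (pd c (pd d (pd i f))) y"
proof -
  have "pd i (pd c (pd d f)) w = pd c (pd d (pd i f)) w" if "w \<in> U" for w
  proof -
    have "pd i (pd c (pd d f)) w = pd c (pd i (pd d f)) w"
      using pd_commute[OF assms(1) regular_on_pd[OF assms(2,5)] that assms(6,4)] .
    also have "\<dots> = pd c (pd d (pd i f)) w"
      using pd_commute[OF assms(1,2) _ assms(6,5)] by (intro pd_cong_open[OF assms(1) _ that])
    finally show ?thesis .
  qed
  then show ?thesis
    unfolding applyZ_append by (auto intro: applyZ_cong_open[OF assms(1) _ assms(3)])
qed

lemma applyZ_snoc_L_pd_pd:
  assumes "open U" "regular_on U f" "y \<in> U" "set pre \<subseteq> valid_vf"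
    and "a \<in> {1,2}" "c \<in> {0,1,2}" "d \<in> {0,1,2}"
  shows "applyZ (pre @ [L a]) (pd c (pd d f)) y = applyZ pre (pd c (pd d (apply_vf (L a) f))) y
    - applyZ pre (boost_commutator a c (pd d f)) y - applyZ pre (pd c (boost_commutator a d f)) y"
proof -
  have L: "L a \<in> valid_vf"
    using assms(5) by (auto simp: valid_vf_def)
  have pd_d: "regular_on U (pd d f)"
    by (rule regular_on_pd[OF assms(2,7)])
  note reg = regular_on_apply_vf[OF assms(1) regular_on_pd[OF pd_d assms(6)] L]
    regular_on_boost_commutator[OF pd_d assms(5)]
    regular_on_pd[OF regular_on_boost_commutator[OF assms(2,5)] assms(6)]
  have "applyZ pre (pd c (pd d (apply_vf (L a) f))) y = applyZ pre (\<lambda>w. apply_vf (L a) (pd c (pd d f)) w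
      + boost_commutator a c (pd d f) w + pd c (boost_commutator a d f) w) y"
    using pd_pd_boost[OF assms(1,2) _ assms(5-7)] by (intro applyZ_cong_open[OF assms(1) _ assms(3)])
  also have "\<dots> = applyZ (pre @ [L a]) (pd c (pd d f)) y
      + applyZ pre (boost_commutator a c (pd d f)) y + applyZ pre (pd c (boost_commutator a d f)) y"
    using reg assms(1,3,4) by (simp add: applyZ_add regular_on_add applyZ_append)
  finally show ?thesis by simp
qed

lemma abs_applyZ_pd_apply_vf_le:
  assumes "open U" "regular_on U f" "y \<in> U" "set pre \<subseteq> valid_vf" "z \<in> valid_vf" "c \<in> {0,1,2}"
    and "0 \<le> B" "\<And>c'. c' \<in> {0,1,2} \<Longrightarrow> \<bar>applyZ pre (pd c' f) y\<bar> \<le> B"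
    and "\<bar>applyZ (pre @ [z]) (pd c f) y\<bar> \<le> B"
  shows "\<bar>applyZ pre (pd c (apply_vf z f)) y\<bar> \<le> 2 * B"
  using assms(5)
proof (cases rule: valid_vfE)
  case (D i)
  then show ?thesis
    using applyZ_pd_pd_eq_snoc[OF assms(1-3,6), of i] assms(7,9) by simp
next
  case (L a)
  have "\<bar>applyZ pre (boost_commutator a c f) y\<bar> \<le> B"
    using assms(7,8) L(2) by (intro boost_commutator_le[where \<Phi> = "\<lambda>G. \<bar>applyZ pre G y\<bar>"]) simp_all
  then show ?thesis
    using applyZ_pd_boost_eq_snoc[OF assms(1-4) L(2) assms(6)] assms(9) L(1) by simp
qed

lemma abs_applyZ_pd_applyZ_le_normD:
  assumes "open U" "regular_on U u" "y \<in> U"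
  shows "set pre \<subseteq> valid_vf \<Longrightarrow> set zs \<subseteq> valid_vf \<Longrightarrow> c \<in> {0,1,2} \<Longrightarrow>
    \<bar>applyZ pre (pd c (applyZ zs u)) y\<bar>
      \<le> 2 ^ length zs * normD (length pre + length zs) (nboost pre + nboost zs) u y"
proof (induction zs arbitrary: pre c)
  case Nil
  then have "pre \<in> adm (length pre) (nboost pre)"
    by (simp add: adm_def)
  from abs_applyZ_le_normpk[OF this, of "pd c u" y] normpk_pd_le_normD[OF Nil.prems(3)]
  show ?case by (simp add: order_trans)
next
  case (Cons z zs)
  define N where "N = normD (length pre + length (z # zs)) (nboost pre + nboost (z # zs)) u y"
  have IH: "\<bar>applyZ pre' (pd c' (applyZ zs u)) y\<bar> \<le> 2 ^ length zs * N"
    if "set pre' \<subseteq> valid_vf" "c' \<in> {0,1,2}" "length pre' \<le> Suc (length pre)"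
      "nboost pre' + nboost zs \<le> nboost pre + nboost (z # zs)" for pre' c'
  proof -
    have "set zs \<subseteq> valid_vf"
      using Cons.prems(2) by simp
    from Cons.IH[OF that(1) this that(2)]
    have "\<bar>applyZ pre' (pd c' (applyZ zs u)) y\<bar>
        \<le> 2 ^ length zs * normD (length pre' + length zs) (nboost pre' + nboost zs) u y" .
    also have "\<dots> \<le> 2 ^ length zs * N"
      unfolding N_def using that(3,4) by (intro mult_left_mono normD_mono) auto
    finally show ?thesis .
  qed
  have "\<bar>applyZ pre (pd c (apply_vf z (applyZ zs u))) y\<bar> \<le> 2 * (2 ^ length zs * N)"
  proof (rule abs_applyZ_pd_apply_vf_le[OF assms(1) regular_on_applyZ[OF assms(1,2)] assms(3)])
    show "\<bar>applyZ (pre @ [z]) (pd c (applyZ zs u)) y\<bar> \<le> 2 ^ length zs * N"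
      using Cons.prems by (intro IH) (auto simp: nboost_def)
    show "\<bar>applyZ pre (pd c' (applyZ zs u)) y\<bar> \<le> 2 ^ length zs * N" if "c' \<in> {0,1,2}" for c'
      using Cons.prems that by (intro IH) (auto simp: nboost_def)
  qed (use Cons.prems normD_nonneg in \<open>simp_all add: N_def\<close>)
  then show ?case by (simp add: N_def)
qed

lemma weighted_applyZ_snoc_pd_pd_le:
  assumes "open U" "regular_on U f" "y \<in> U" "set pre \<subseteq> valid_vf" "z \<in> valid_vf"
    and "c \<in> {0,1,2}" "d \<in> {0,1,2}" "0 \<le> \<rho>" "0 \<le> B"
    and "\<And>c' d'. c' \<in> {0,1,2} \<Longrightarrow> d' \<in> {0,1,2} \<Longrightarrow> \<rho> * \<bar>applyZ pre (pd c' (pd d' f)) y\<bar> \<le> B"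
    and "\<rho> * \<bar>applyZ pre (pd c (pd d (apply_vf z f))) y\<bar> \<le> 2 * B"
  shows "\<rho> * \<bar>applyZ (pre @ [z]) (pd c (pd d f)) y\<bar> \<le> 4 * B"
  using assms(5)
proof (cases rule: valid_vfE)
  case (D i)
  then show ?thesis
    using applyZ_snoc_D_pd_pd[OF assms(1-3,6,7) D(2), of pre] assms(9,11) by simp
next
  case (L a)
  define A where "A = applyZ pre (pd c (pd d (apply_vf z f))) y"
  define B1 where "B1 = applyZ pre (boost_commutator a c (pd d f)) y"
  define B2 where "B2 = applyZ pre (pd c (boost_commutator a d f)) y"
  have "\<rho> * \<bar>B1\<bar> \<le> B" "\<rho> * \<bar>B2\<bar> \<le> B"
    unfolding B1_def B2_def using assms(6-10) L(2)
    by (intro boost_commutator_le[where \<Phi> = "\<lambda>G. \<rho> * \<bar>applyZ pre G y\<bar>"]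
        boost_commutator_le[where \<Phi> = "\<lambda>G. \<rho> * \<bar>applyZ pre (pd c G) y\<bar>"]; simp)+
  moreover have "\<rho> * \<bar>A - B1 - B2\<bar> \<le> \<rho> * \<bar>A\<bar> + \<rho> * \<bar>B1\<bar> + \<rho> * \<bar>B2\<bar>"
  proof -
    have "\<bar>A - B1 - B2\<bar> \<le> \<bar>A\<bar> + \<bar>B1\<bar> + \<bar>B2\<bar>"
      by (rule order_trans[OF abs_triangle_ineq4 add_mono[OF abs_triangle_ineq4 order_refl]])
    from mult_left_mono[OF this assms(8)] show ?thesis
      by (simp add: distrib_left)
  qed
  moreover have "applyZ (pre @ [z]) (pd c (pd d f)) y = A - B1 - B2"
    using applyZ_snoc_L_pd_pd[OF assms(1-4) L(2) assms(6,7)] L(1) by (simp add: A_def B1_def B2_def)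
  ultimately show ?thesis
    using assms(11) by (simp add: A_def)
qed

section \<open>The Hessian estimates\<close>

lemma weighted_abs_le_of_boost_identity:
  fixes t \<rho> A B X x M K :: real
  assumes "t > 0" "0 \<le> \<rho>" "\<rho> \<le> 1" "\<bar>A\<bar> \<le> M" "\<rho> * \<bar>B\<bar> \<le> K" "\<bar>x\<bar> \<le> t"
    and "t * X = A - x * B"
  shows "\<rho> * \<bar>X\<bar> \<le> M / t + K"
proof -
  have "t * (\<rho> * \<bar>X\<bar>) = \<rho> * \<bar>A - x * B\<bar>"
    using assms(1,2,7) by (simp add: abs_mult mult.left_commute flip: assms(7))
  also have "\<dots> \<le> \<rho> * \<bar>A\<bar> + \<bar>x\<bar> * (\<rho> * \<bar>B\<bar>)"
    using assms(2) abs_triangle_ineq4[of A "x * B"]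
    by (simp add: abs_mult mult_left_mono distrib_left[symmetric] mult.left_commute)
  also have "\<dots> \<le> M + t * K"
    using assms(2-6) by (intro add_mono mult_mono) (auto intro: mult_le_one order_trans[OF mult_left_le_one_le])
  finally show ?thesis
    using assms(1) by (simp add: field_simps)
qed

lemma cone_abs_le:
  fixes x :: "nat \<Rightarrow> real"
  assumes "0 < x 0" "(x 1)\<^sup>2 + (x 2)\<^sup>2 \<le> (x 0)\<^sup>2" "a \<in> {1,2}"
  shows "\<bar>x a\<bar> \<le> x 0"
proof -
  have "(x 1)\<^sup>2 \<le> (x 0)\<^sup>2" "(x 2)\<^sup>2 \<le> (x 0)\<^sup>2"
    using assms(2) zero_le_power2[of "x 1"] zero_le_power2[of "x 2"] by linarith+
  then have "(x a)\<^sup>2 \<le> (x 0)\<^sup>2"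
    using assms(3) by auto
  with assms(1) show ?thesis
    using abs_le_square_iff[of "x a" "x 0"] by simp
qed

lemma cone_weighted_hessian_00_le:
  fixes w :: "nat \<Rightarrow> nat \<Rightarrow> real" and x :: "nat \<Rightarrow> real"
  assumes t: "0 < x 0" and cone: "(x 1)\<^sup>2 + (x 2)\<^sup>2 \<le> (x 0)\<^sup>2"
    and sym: "w 1 0 = w 0 1" "w 2 0 = w 0 2"
    and boost: "\<And>a c. a \<in> {1,2} \<Longrightarrow> c \<in> {0,1,2} \<Longrightarrow> \<bar>x a * w 0 c + x 0 * w a c\<bar> \<le> M"
  shows "((x 0)\<^sup>2 - (x 1)\<^sup>2 - (x 2)\<^sup>2) / (x 0)\<^sup>2 * \<bar>w 0 0\<bar> \<le> \<bar>w 0 0 - w 1 1 - w 2 2\<bar> + 4 * M / x 0"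
proof -
  define P where "P a c = x a * w 0 c + x 0 * w a c" for a c
  have P: "\<bar>P a c\<bar> \<le> M" if "a \<in> {1,2}" "c \<in> {0,1,2}" for a c
    using boost[OF that] by (simp add: P_def)
  have "\<bar>P 1 1 + P 2 2\<bar> \<le> 2 * M"
    using P[of 1 1] P[of 2 2] by simp
  then have space: "\<bar>(P 1 1 + P 2 2) / x 0\<bar> \<le> 2 * M / x 0"
    using t by (simp add: abs_divide divide_right_mono)
  have xP: "\<bar>x a\<bar> * \<bar>P a 0\<bar> \<le> x 0 * M" if "a \<in> {1,2}" for a
    using cone_abs_le[OF t cone that] P[OF that] t by (intro mult_mono) auto
  have "\<bar>x 1 * P 1 0 + x 2 * P 2 0\<bar> \<le> \<bar>x 1\<bar> * \<bar>P 1 0\<bar> + \<bar>x 2\<bar> * \<bar>P 2 0\<bar>"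
    unfolding abs_mult[symmetric] by (rule abs_triangle_ineq)
  also have "\<dots> \<le> x 0 * M + x 0 * M"
    by (intro add_mono xP) auto
  finally have mixed: "\<bar>(x 1 * P 1 0 + x 2 * P 2 0) / (x 0)\<^sup>2\<bar> \<le> 2 * M / x 0"
    using t by (simp add: abs_divide divide_le_eq power2_eq_square algebra_simps)
  have identity: "((x 0)\<^sup>2 - (x 1)\<^sup>2 - (x 2)\<^sup>2) / (x 0)\<^sup>2 * w 0 0
      = (w 0 0 - w 1 1 - w 2 2) + (P 1 1 + P 2 2) / x 0 - (x 1 * P 1 0 + x 2 * P 2 0) / (x 0)\<^sup>2"
    using t sym by (simp add: P_def field_simps power2_eq_square)
  have "0 \<le> ((x 0)\<^sup>2 - (x 1)\<^sup>2 - (x 2)\<^sup>2) / (x 0)\<^sup>2"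
    using cone by simp
  then have "((x 0)\<^sup>2 - (x 1)\<^sup>2 - (x 2)\<^sup>2) / (x 0)\<^sup>2 * \<bar>w 0 0\<bar>
      = \<bar>((x 0)\<^sup>2 - (x 1)\<^sup>2 - (x 2)\<^sup>2) / (x 0)\<^sup>2 * w 0 0\<bar>"
    by (simp only: abs_mult abs_of_nonneg)
  also have "\<dots> = \<bar>(w 0 0 - w 1 1 - w 2 2) + (P 1 1 + P 2 2) / x 0 - (x 1 * P 1 0 + x 2 * P 2 0) / (x 0)\<^sup>2\<bar>"
    by (simp only: identity)
  also have "\<dots> \<le> \<bar>w 0 0 - w 1 1 - w 2 2\<bar> + \<bar>(P 1 1 + P 2 2) / x 0\<bar> + \<bar>(x 1 * P 1 0 + x 2 * P 2 0) / (x 0)\<^sup>2\<bar>"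
    by (rule order_trans[OF abs_triangle_ineq4 add_mono[OF abs_triangle_ineq order_refl]])
  also have "\<dots> \<le> \<bar>w 0 0 - w 1 1 - w 2 2\<bar> + 2 * M / x 0 + 2 * M / x 0"
    using space mixed by linarith
  finally show ?thesis
    by simp
qed

lemma cone_weighted_hessian_le:
  fixes w :: "nat \<Rightarrow> nat \<Rightarrow> real" and x :: "nat \<Rightarrow> real"
  assumes t: "0 < x 0" and cone: "(x 1)\<^sup>2 + (x 2)\<^sup>2 \<le> (x 0)\<^sup>2"
    and sym: "w 1 0 = w 0 1" "w 2 0 = w 0 2"
    and boost: "\<And>a c. a \<in> {1,2} \<Longrightarrow> c \<in> {0,1,2} \<Longrightarrow> \<bar>x a * w 0 c + x 0 * w a c\<bar> \<le> M"
    and "b \<in> {0,1,2}" "c \<in> {0,1,2}"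
  shows "((x 0)\<^sup>2 - (x 1)\<^sup>2 - (x 2)\<^sup>2) / (x 0)\<^sup>2 * \<bar>w b c\<bar> \<le> \<bar>w 0 0 - w 1 1 - w 2 2\<bar> + 6 * M / x 0"
proof -
  define \<rho> where "\<rho> = ((x 0)\<^sup>2 - (x 1)\<^sup>2 - (x 2)\<^sup>2) / (x 0)\<^sup>2"
  define W where "W = \<bar>w 0 0 - w 1 1 - w 2 2\<bar>"
  have \<rho>: "0 \<le> \<rho>" "\<rho> \<le> 1"
    using cone t by (simp_all add: \<rho>_def divide_le_eq_1)
  have M: "0 \<le> M / x 0"
    using boost[of 1 0] t by simp
  have w00: "\<rho> * \<bar>w 0 0\<bar> \<le> W + 4 * M / x 0"
    unfolding \<rho>_def W_def by (rule cone_weighted_hessian_00_le[OF t cone sym boost])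
  have wa0: "\<rho> * \<bar>w a 0\<bar> \<le> W + 5 * M / x 0" "\<rho> * \<bar>w 0 a\<bar> \<le> W + 5 * M / x 0" if "a \<in> {1,2}" for a
  proof -
    have "\<rho> * \<bar>w a 0\<bar> \<le> M / x 0 + (W + 4 * M / x 0)"
      using boost[OF that, of 0] cone_abs_le[OF t cone that]
      by (intro weighted_abs_le_of_boost_identity[OF t \<rho> _ w00]) auto
    then show "\<rho> * \<bar>w a 0\<bar> \<le> W + 5 * M / x 0"
      by (simp add: field_simps)
    with that sym show "\<rho> * \<bar>w 0 a\<bar> \<le> W + 5 * M / x 0"
      by auto
  qed
  have wac: "\<rho> * \<bar>w a c\<bar> \<le> W + 6 * M / x 0" if "a \<in> {1,2}" "c \<in> {1,2}" for a c
  proof -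
    have "\<rho> * \<bar>w a c\<bar> \<le> M / x 0 + (W + 5 * M / x 0)"
      using boost[OF that(1), of c] cone_abs_le[OF t cone that(1)] that(2)
      by (intro weighted_abs_le_of_boost_identity[OF t \<rho> _ wa0(2)[OF that(2)]]) auto
    then show ?thesis
      by (simp add: field_simps)
  qed
  have le6: "W + 4 * M / x 0 \<le> W + 6 * M / x 0" "W + 5 * M / x 0 \<le> W + 6 * M / x 0"
    using M by simp_all
  have "\<rho> * \<bar>w b c\<bar> \<le> W + 6 * M / x 0"
    using assms(6,7) by (auto intro: order_trans[OF w00 le6(1)] order_trans[OF wa0(1) le6(2)]
        order_trans[OF wa0(2) le6(2)] wac)
  then show ?thesis
    by (simp add: \<rho>_def W_def)
qed

definition hessian_majorant :: "(pt \<Rightarrow> real) \<Rightarrow> nat \<Rightarrow> nat \<Rightarrow> pt \<Rightarrow> real" where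
  "hessian_majorant u p k y = normpk p k (wave u) y + normD (p + 1) (k + 1) u y / coord 0 y"

lemma hessian_majorant_nonneg: "0 < coord 0 y \<Longrightarrow> 0 \<le> hessian_majorant u p k y"
  unfolding hessian_majorant_def using normpk_nonneg normD_nonneg by simp

lemma hessian_majorant_mono:
  "0 < coord 0 y \<Longrightarrow> p \<le> p' \<Longrightarrow> k \<le> k' \<Longrightarrow> hessian_majorant u p k y \<le> hessian_majorant u p' k' y"
  unfolding hessian_majorant_def by (intro add_mono divide_right_mono normpk_mono normD_mono) auto

lemma weighted_pd_pd_applyZ_le:
  assumes "open U" "regular_on U u" "(t, x1, x2) \<in> U" "0 < t" "x1\<^sup>2 + x2\<^sup>2 \<le> t\<^sup>2"
    and "set zs \<subseteq> valid_vf" "\<alpha> \<in> {0,1,2}" "\<beta> \<in> {0,1,2}"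
  shows "(t\<^sup>2 - x1\<^sup>2 - x2\<^sup>2) / t\<^sup>2 * \<bar>pd \<alpha> (pd \<beta> (applyZ zs u)) (t, x1, x2)\<bar>
    \<le> 6 * 2 ^ length zs * hessian_majorant u (length zs) (nboost zs) (t, x1, x2)"
proof -
  define y where "y = (t, x1, x2)"
  define F where "F = applyZ zs u"
  define M where "M = 2 ^ length zs * normD (length zs + 1) (nboost zs + 1) u y"
  have y: "y \<in> U" and F: "regular_on U F"
    using assms by (simp_all add: y_def F_def regular_on_applyZ)
  have "((coord 0 y)\<^sup>2 - (coord 1 y)\<^sup>2 - (coord 2 y)\<^sup>2) / (coord 0 y)\<^sup>2 * \<bar>pd \<alpha> (pd \<beta> F) y\<bar>
      \<le> \<bar>wave F y\<bar> + 6 * M / coord 0 y"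
    unfolding wave_def
  proof (rule cone_weighted_hessian_le[where x = "\<lambda>a. coord a y" and w = "\<lambda>a c. pd a (pd c F) y"])
    show "0 < coord 0 y" "(coord 1 y)\<^sup>2 + (coord 2 y)\<^sup>2 \<le> (coord 0 y)\<^sup>2"
      using assms(4,5) by (simp_all add: y_def coord_def)
    show "pd 1 (pd 0 F) y = pd 0 (pd 1 F) y" "pd 2 (pd 0 F) y = pd 0 (pd 2 F) y"
      by (rule pd_commute[OF assms(1) F y]; simp)+
    show "\<bar>coord a y * pd 0 (pd c F) y + coord 0 y * pd a (pd c F) y\<bar> \<le> M"
      if "a \<in> {1,2}" "c \<in> {0,1,2}" for a c
    proof -
      have "set [L a] \<subseteq> valid_vf"
        using that(1) by (simp add: valid_vf_def)
      from abs_applyZ_pd_applyZ_le_normD[OF assms(1,2) y this assms(6) that(2)]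
      show ?thesis by (simp add: F_def M_def)
    qed
  qed (use assms(7,8) in auto)
  moreover have "\<bar>wave F y\<bar> \<le> normpk (length zs) (nboost zs) (wave u) y"
    unfolding F_def wave_applyZ[OF assms(1,2,6) y] using assms(6)
    by (intro abs_applyZ_le_normpk) (simp add: adm_def)
  moreover have "normpk (length zs) (nboost zs) (wave u) y \<le> 6 * 2 ^ length zs * normpk (length zs) (nboost zs) (wave u) y"
  proof -
    have "(1::real) \<le> 6 * 2 ^ length zs"
      using one_le_power[of "2::real" "length zs"] by linarith
    from mult_right_mono[OF this normpk_nonneg] show ?thesis
      by simp
  qed
  ultimately show ?thesis
    by (simp add: hessian_majorant_def M_def y_def F_def coord_def distrib_left)
qed

(* Moving one field of pre inside \<partial>\<partial> gives a term of the same order and two lower-order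
   commutator terms, whence the factor 4 per field. *)
lemma weighted_applyZ_pd_pd_applyZ_le:
  assumes "open U" "regular_on U u" "(t, x1, x2) \<in> U" "0 < t" "x1\<^sup>2 + x2\<^sup>2 \<le> t\<^sup>2"
  shows "set pre \<subseteq> valid_vf \<Longrightarrow> set zs \<subseteq> valid_vf \<Longrightarrow> c \<in> {0,1,2} \<Longrightarrow> d \<in> {0,1,2} \<Longrightarrow>
    (t\<^sup>2 - x1\<^sup>2 - x2\<^sup>2) / t\<^sup>2 * \<bar>applyZ pre (pd c (pd d (applyZ zs u))) (t, x1, x2)\<bar>
      \<le> 6 * 2 ^ (2 * length pre + length zs)
          * hessian_majorant u (length pre + length zs) (nboost pre + nboost zs) (t, x1, x2)"
proof (induction pre arbitrary: zs c d rule: rev_induct)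
  case Nil
  then show ?case using weighted_pd_pd_applyZ_le[OF assms] by simp
next
  case (snoc z pre)
  define y where "y = (t, x1, x2)"
  define \<rho> where "\<rho> = (t\<^sup>2 - x1\<^sup>2 - x2\<^sup>2) / t\<^sup>2"
  define H where "H = hessian_majorant u (length (pre @ [z]) + length zs) (nboost (pre @ [z]) + nboost zs) y"
  define B :: real where "B = 6 * 2 ^ (2 * length pre + length zs) * H"
  have pre: "set pre \<subseteq> valid_vf" and z: "z \<in> valid_vf"
    using snoc.prems by simp_all
  have "\<rho> * \<bar>applyZ (pre @ [z]) (pd c (pd d (applyZ zs u))) y\<bar> \<le> 4 * B"
  proof (rule weighted_applyZ_snoc_pd_pd_le[OF assms(1) regular_on_applyZ[OF assms(1,2)] _ pre z])
    show "0 \<le> \<rho>" "0 \<le> B"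
      using assms(4,5) by (simp_all add: \<rho>_def B_def H_def y_def coord_def hessian_majorant_nonneg)
    show "\<rho> * \<bar>applyZ pre (pd c' (pd d' (applyZ zs u))) y\<bar> \<le> B"
      if "c' \<in> {0,1,2}" "d' \<in> {0,1,2}" for c' d'
    proof -
      have "\<rho> * \<bar>applyZ pre (pd c' (pd d' (applyZ zs u))) y\<bar>
          \<le> 6 * 2 ^ (2 * length pre + length zs) * hessian_majorant u (length pre + length zs) (nboost pre + nboost zs) y"
        using snoc.IH[OF pre snoc.prems(2) that] by (simp add: \<rho>_def y_def)
      also have "\<dots> \<le> B"
        unfolding B_def H_def using assms(4)
        by (intro mult_left_mono hessian_majorant_mono) (simp_all add: y_def coord_def)
      finally show ?thesis .
    qed
    have "nboost pre + nboost (z # zs) = nboost (pre @ [z]) + nboost zs"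
      by (simp add: nboost_def)
    with snoc.IH[OF pre _ snoc.prems(3,4), of "z # zs"] snoc.prems(2) z
    show "\<rho> * \<bar>applyZ pre (pd c (pd d (apply_vf z (applyZ zs u)))) y\<bar> \<le> 2 * B"
      by (simp add: \<rho>_def y_def B_def H_def)
  qed (use assms(3) snoc.prems in \<open>simp_all add: y_def\<close>)
  then show ?case
    by (simp add: \<rho>_def y_def B_def H_def power_add)
qed

lemma Kset_imp_cone:
  assumes "(t, x1, x2) \<in> Kset s0 s1"
  shows "0 < t" "x1\<^sup>2 + x2\<^sup>2 \<le> t\<^sup>2"
proof -
  have "sqrt (x1\<^sup>2 + x2\<^sup>2) < t"
    using assms by (simp add: Kset_def)
  moreover have "0 \<le> sqrt (x1\<^sup>2 + x2\<^sup>2)"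
    by simp
  ultimately show "0 < t"
    by linarith
  with \<open>sqrt (x1\<^sup>2 + x2\<^sup>2) < t\<close> show "x1\<^sup>2 + x2\<^sup>2 \<le> t\<^sup>2"
    using real_sqrt_less_iff[of "x1\<^sup>2 + x2\<^sup>2" "t\<^sup>2"] by simp
qed

lemma Kset_weighted_applyZ_pd_pd_applyZ_le:
  assumes "open U" "Kset s0 s1 \<subseteq> U" "regular_on U u" "(t, x1, x2) \<in> Kset s0 s1"
    and "pre @ zs \<in> adm p k" "c \<in> {0,1,2}" "d \<in> {0,1,2}"
  shows "(sqrt (t\<^sup>2 - x1\<^sup>2 - x2\<^sup>2) / t)\<^sup>2 * \<bar>applyZ pre (pd c (pd d (applyZ zs u))) (t, x1, x2)\<bar>
    \<le> 6 * 4 ^ p * normpk p k (wave u) (t, x1, x2) + 6 * 4 ^ p * (1 / t) * normD (p + 1) (k + 1) u (t, x1, x2)"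
proof -
  note cone = Kset_imp_cone[OF assms(4)]
  have adm: "set pre \<subseteq> valid_vf" "set zs \<subseteq> valid_vf" "length pre + length zs \<le> p" "nboost pre + nboost zs \<le> k"
    using assms(5) by (auto simp: adm_def)
  have "(2::real) ^ (2 * length pre + length zs) \<le> 2 ^ (2 * p)"
    using adm(3) by (intro power_increasing) auto
  then have "6 * 2 ^ (2 * length pre + length zs) * hessian_majorant u (length pre + length zs) (nboost pre + nboost zs) (t, x1, x2)
      \<le> 6 * 4 ^ p * hessian_majorant u p k (t, x1, x2)"
    using adm(3,4) cone
    by (intro mult_mono hessian_majorant_mono hessian_majorant_nonneg) (simp_all add: coord_def power_mult)
  with weighted_applyZ_pd_pd_applyZ_le[OF assms(1,3) _ cone adm(1,2) assms(6,7)] assms(2,4) cone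
  show ?thesis
    by (auto simp: power_divide hessian_majorant_def coord_def distrib_left)
qed

theorem lemma7p1:
  fixes p :: nat
  shows "\<exists>C::real.
    (\<forall>s0 s1 U u k zs \<alpha> \<beta> t x1 x2.
        open U \<and> Kset s0 s1 \<subseteq> U \<and> regular_on U u \<and> k \<le> p \<and>
        set zs \<subseteq> valid_vf \<and> length zs = p \<and> nboost zs = k \<and>
        \<alpha> \<in> {0,1,2} \<and> \<beta> \<in> {0,1,2} \<and> (t, x1, x2) \<in> Kset s0 s1 \<longrightarrow>
        (sqrt (t\<^sup>2 - x1\<^sup>2 - x2\<^sup>2) / t)\<^sup>2 * \<bar>pd \<alpha> (pd \<beta> (applyZ zs u)) (t, x1, x2)\<bar>
          \<le> C * normpk p k (wave u) (t, x1, x2) + C * (1 / t) * normD (p + 1) (k + 1) u (t, x1, x2))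
  \<and> (\<forall>s0 s1 U u k t x1 x2.
        open U \<and> Kset s0 s1 \<subseteq> U \<and> regular_on U u \<and> k \<le> p \<and> (t, x1, x2) \<in> Kset s0 s1 \<longrightarrow>
        (sqrt (t\<^sup>2 - x1\<^sup>2 - x2\<^sup>2) / t)\<^sup>2 * normDD p k u (t, x1, x2)
          \<le> C * normpk p k (wave u) (t, x1, x2) + C * (1 / t) * normD (p + 1) (k + 1) u (t, x1, x2))"
proof (intro exI[of _ "6 * 4 ^ p"] conjI allI impI)
  fix s0 s1 t x1 x2 :: real and U :: "pt set" and u :: "pt \<Rightarrow> real" and k :: nat
    and zs :: "vf list" and \<alpha> \<beta> :: nat
  assume "open U \<and> Kset s0 s1 \<subseteq> U \<and> regular_on U u \<and> k \<le> p \<and>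
      set zs \<subseteq> valid_vf \<and> length zs = p \<and> nboost zs = k \<and>
      \<alpha> \<in> {0,1,2} \<and> \<beta> \<in> {0,1,2} \<and> (t, x1, x2) \<in> Kset s0 s1"
  then show "(sqrt (t\<^sup>2 - x1\<^sup>2 - x2\<^sup>2) / t)\<^sup>2 * \<bar>pd \<alpha> (pd \<beta> (applyZ zs u)) (t, x1, x2)\<bar>
      \<le> 6 * 4 ^ p * normpk p k (wave u) (t, x1, x2) + 6 * 4 ^ p * (1 / t) * normD (p + 1) (k + 1) u (t, x1, x2)"
    using Kset_weighted_applyZ_pd_pd_applyZ_le[of U s0 s1 u t x1 x2 "[]" zs p k \<alpha> \<beta>]
    by (simp add: adm_def)
next
  fix s0 s1 t x1 x2 :: real and U :: "pt set" and u :: "pt \<Rightarrow> real" and k :: nat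
  assume "open U \<and> Kset s0 s1 \<subseteq> U \<and> regular_on U u \<and> k \<le> p \<and> (t, x1, x2) \<in> Kset s0 s1"
  then show "(sqrt (t\<^sup>2 - x1\<^sup>2 - x2\<^sup>2) / t)\<^sup>2 * normDD p k u (t, x1, x2)
      \<le> 6 * 4 ^ p * normpk p k (wave u) (t, x1, x2) + 6 * 4 ^ p * (1 / t) * normD (p + 1) (k + 1) u (t, x1, x2)"
    using Kset_weighted_applyZ_pd_pd_applyZ_le[of U s0 s1 u t x1 x2 _ "[]" p k]
    by (intro mult_normDD_le) simp
qed

end
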